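(* Let $G$ be a finite simple undirected graph with $\alpha(G)=k$. Suppose $\{v_1,\ldots,v_k\}$ is an independent set of $G$ and $S=\{S_1,\ldots,S_k\}$ is a total clique covering of $G$ such that, for each $i=1,\ldots,k$, $S_i$ is the only member of $S$ containing $v_i$. Then $\theta_t(G)=\alpha(G)=k$ and $S$ is the only total clique covering of $G$ consisting of exactly $k$ cliques.
   Context: $\alpha(G)$ is the maximum size of an independent set of $G$. A clique is a set of pairwise adjacent vertices; a set $S$ of cliques of $G$ is a total clique covering if every vertex lies in some member of $S$ and every edge has both endpoints in some member of $S$. $\theta_t(G)$ is the minimum size of a total clique covering of $G$. *)

theory Defs
  imports Main
begin

definition simple_graph :: "'a set \<Rightarrow> ('a \<Rightarrow> 'a \<Rightarrow> bool) \<Rightarrow> bool" where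
  "simple_graph V E \<longleftrightarrow> finite V \<and> (\<forall>x y. E x y \<longrightarrow> x \<in> V \<and> y \<in> V)
     \<and> (\<forall>x y. E x y \<longrightarrow> E y x) \<and> (\<forall>x. \<not> E x x)"

definition independent_set :: "'a set \<Rightarrow> ('a \<Rightarrow> 'a \<Rightarrow> bool) \<Rightarrow> 'a set \<Rightarrow> bool" where
  "independent_set V E I \<longleftrightarrow> I \<subseteq> V \<and> (\<forall>x\<in>I. \<forall>y\<in>I. \<not> E x y)"

definition alpha :: "'a set \<Rightarrow> ('a \<Rightarrow> 'a \<Rightarrow> bool) \<Rightarrow> nat" where
  "alpha V E = Max {card I | I. independent_set V E I}"

definition clique :: "'a set \<Rightarrow> ('a \<Rightarrow> 'a \<Rightarrow> bool) \<Rightarrow> 'a set \<Rightarrow> bool" where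
  "clique V E C \<longleftrightarrow> C \<subseteq> V \<and> (\<forall>x\<in>C. \<forall>y\<in>C. x \<noteq> y \<longrightarrow> E x y)"

definition total_clique_covering :: "'a set \<Rightarrow> ('a \<Rightarrow> 'a \<Rightarrow> bool) \<Rightarrow> 'a set set \<Rightarrow> bool" where
  "total_clique_covering V E S \<longleftrightarrow>
     (\<forall>C\<in>S. clique V E C) \<and> (\<forall>v\<in>V. \<exists>C\<in>S. v \<in> C)
     \<and> (\<forall>x y. E x y \<longrightarrow> (\<exists>C\<in>S. x \<in> C \<and> y \<in> C))"

definition theta_t :: "'a set \<Rightarrow> ('a \<Rightarrow> 'a \<Rightarrow> bool) \<Rightarrow> nat" where
  "theta_t V E = (LEAST n. \<exists>S. total_clique_covering V E S \<and> finite S \<and> card S = n)"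

end

theory Submission
  imports Defs
begin

text \<open>Distinct vertices of an independent set I lie in distinct cliques, so every total clique
covering T has at least |I| members. If it has exactly |I| members, every vertex x of I lies in
exactly one member of T. That member then contains every edge at x, so it is the closed
neighbourhood of x. Hence T is determined by I, and the hypothesis that each S i is the only
member of S containing v i follows from counting.\<close>

definition closed_neighbourhood :: "('a \<Rightarrow> 'a \<Rightarrow> bool) \<Rightarrow> 'a \<Rightarrow> 'a set" where
  "closed_neighbourhood E x = insert x {y. E x y}"

lemma clique_independent_set_inter_eq:
  assumes "clique V E C" "independent_set V E I"
    and "x \<in> C" "y \<in> C" "x \<in> I" "y \<in> I"
  shows "x = y"
  using assms unfolding clique_def independent_set_def by blast

lemma total_clique_covering_private_clique:
  assumes "total_clique_covering V E T" "C \<in> T" "x \<in> C"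
    and "\<forall>D\<in>T. x \<in> D \<longrightarrow> D = C"
  shows "C = closed_neighbourhood E x"
proof
  have "clique V E C" using assms(1,2) unfolding total_clique_covering_def by simp
  then show "C \<subseteq> closed_neighbourhood E x"
    using assms(3) unfolding clique_def closed_neighbourhood_def by auto
next
  have "y \<in> C" if "E x y" for y
  proof -
    obtain D where "D \<in> T" "x \<in> D" "y \<in> D"
      using assms(1) \<open>E x y\<close> unfolding total_clique_covering_def by blast
    then show ?thesis using assms(4) by simp
  qed
  then show "closed_neighbourhood E x \<subseteq> C"
    using assms(3) unfolding closed_neighbourhood_def by auto
qed

lemma total_clique_covering_inj_on_independent_set:
  assumes "total_clique_covering V E T" "independent_set V E I"
  obtains f where "inj_on f I" "\<forall>x\<in>I. f x \<in> T \<and> x \<in> f x"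
proof -
  have "\<forall>x\<in>I. \<exists>C\<in>T. x \<in> C"
    using assms unfolding total_clique_covering_def independent_set_def by blast
  then obtain f where f: "\<forall>x\<in>I. f x \<in> T \<and> x \<in> f x"
    by (metis bchoice)
  have "inj_on f I"
  proof (rule inj_onI)
    fix x y assume "x \<in> I" "y \<in> I" "f x = f y"
    moreover have "clique V E (f x)"
      using assms(1) f \<open>x \<in> I\<close> unfolding total_clique_covering_def by blast
    ultimately show "x = y"
      using clique_independent_set_inter_eq[OF _ assms(2)] f by metis
  qed
  with f show ?thesis using that by blast
qed

lemma card_independent_set_le_card_total_clique_covering:
  assumes "total_clique_covering V E T" "finite T" "independent_set V E I"
  shows "card I \<le> card T"
proof -
  obtain f where "inj_on f I" "\<forall>x\<in>I. f x \<in> T \<and> x \<in> f x"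
    using total_clique_covering_inj_on_independent_set[OF assms(1,3)] .
  then show ?thesis using card_inj_on_le[OF _ _ assms(2)] by blast
qed

lemma minimum_total_clique_covering_eq_closed_neighbourhoods:
  assumes T: "total_clique_covering V E T" "finite T"
    and I: "independent_set V E I" and "card T = card I"
  shows "T = closed_neighbourhood E ` I"
proof -
  obtain f where f: "inj_on f I" "\<forall>x\<in>I. f x \<in> T \<and> x \<in> f x"
    using total_clique_covering_inj_on_independent_set[OF T(1) I] .
  have sub: "f ` I \<subseteq> T" using f(2) by blast
  then have "finite I" using f(1) T(2) finite_imageD finite_subset by blast
  then have "card (f ` I) = card T" using f(1) \<open>card T = card I\<close> by (simp add: card_image)
  then have T_eq: "T = f ` I" using card_subset_eq[OF T(2) sub] by simp
  have "f x = closed_neighbourhood E x" if x: "x \<in> I" for x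
  proof (rule total_clique_covering_private_clique[OF T(1)])
    show "f x \<in> T" "x \<in> f x" using f(2) x by auto
    show "\<forall>D\<in>T. x \<in> D \<longrightarrow> D = f x"
    proof (intro ballI impI)
      fix D assume "D \<in> T" "x \<in> D"
      then obtain y where y: "y \<in> I" "D = f y" using T_eq by blast
      have "clique V E D" using T(1) \<open>D \<in> T\<close> unfolding total_clique_covering_def by blast
      then have "x = y"
        using clique_independent_set_inter_eq[OF _ I] \<open>x \<in> D\<close> f(2) x y by blast
      then show "D = f x" using y by simp
    qed
  qed
  then show ?thesis using T_eq by (auto intro: image_cong)
qed

lemma theta_t_eq_card_independent_set:
  assumes "total_clique_covering V E S" "finite S"
    and I: "independent_set V E I" and "card S = card I"
  shows "theta_t V E = card I"
  unfolding theta_t_def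
proof (rule Least_equality)
  show "\<exists>S. total_clique_covering V E S \<and> finite S \<and> card S = card I"
    using assms by blast
next
  fix n assume "\<exists>T. total_clique_covering V E T \<and> finite T \<and> card T = n"
  then show "card I \<le> n"
    using card_independent_set_le_card_total_clique_covering[OF _ _ I] by blast
qed

theorem proposition1:
  fixes V :: "'a set" and E :: "'a \<Rightarrow> 'a \<Rightarrow> bool" and k :: nat
    and v :: "nat \<Rightarrow> 'a" and Sc :: "nat \<Rightarrow> 'a set" and S :: "'a set set"
  assumes "simple_graph V E"
    and "alpha V E = k"
    and "inj_on v {1..k}"
    and "independent_set V E (v ` {1..k})"
    and "S = Sc ` {1..k}"
    and "total_clique_covering V E S"
    and "\<forall>i\<in>{1..k}. \<forall>C\<in>S. v i \<in> C \<longrightarrow> C = Sc i"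
  shows "theta_t V E = alpha V E \<and> alpha V E = k
    \<and> (\<forall>T. total_clique_covering V E T \<and> finite T \<and> card T = k \<longrightarrow> T = S)"
proof -
  let ?I = "v ` {1..k}"
  have card_I: "card ?I = k" using assms(3) by (simp add: card_image)
  have "finite S" using assms(5) by simp
  have "card S = k"
    using card_independent_set_le_card_total_clique_covering[OF assms(6) \<open>finite S\<close> assms(4)]
      card_image_le[of "{1..k}" Sc] assms(5) card_I by simp
  have "theta_t V E = k"
    using theta_t_eq_card_independent_set[OF assms(6) \<open>finite S\<close> assms(4)]
      \<open>card S = k\<close> card_I by simp
  moreover have "T = S" if "total_clique_covering V E T" "finite T" "card T = k" for T
  proof -
    have "T = closed_neighbourhood E ` ?I"
      using minimum_total_clique_covering_eq_closed_neighbourhoods[OF that(1,2) assms(4)]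
        that(3) card_I by simp
    also have "\<dots> = S"
      using minimum_total_clique_covering_eq_closed_neighbourhoods[OF assms(6) \<open>finite S\<close> assms(4)]
        \<open>card S = k\<close> card_I by simp
    finally show ?thesis .
  qed
  ultimately show ?thesis using assms(2) by simp
qed

end
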